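(* Let $s\ge 1$ and let $i,j$ be integers with $s\le j<i\le 2s$. Define $$U(s,i,j)=(-1)^{s+i+j}\,i\binom{2s}{i}\sum_{j'=0}^{s}\sum_{t=1}^{s-j'}\frac{(-1)^{j'+t+1}}{t}\binom{i-j'-1}{s+t-1}\binom{s}{t-1}\binom{s}{j-j'}\binom{s-j'}{t}^{-1}.$$ Then $U(s,i,j)=(-1)^{j+1}\binom{2s}{j}$.
   Context: Binomial coefficients $\binom{a}{b}$ are zero when $b<0$ or $b>a\ge 0$. An empty inner sum is $0$. *)

theory Defs
  imports Complex_Main
begin

text \<open>U(s,i,j), computed over the rationals. All binomial arguments are
nonnegative in the range s \<le> j < i \<le> 2s, 0 \<le> j' \<le> s, 1 \<le> t \<le> s - j'.
An empty inner sum (j' = s) is 0.\<close>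
definition U :: "nat \<Rightarrow> nat \<Rightarrow> nat \<Rightarrow> rat" where
  "U s i j = (-1) ^ (s + i + j) * of_nat i * of_nat (2 * s choose i) *
     (\<Sum>j'=0..s. \<Sum>t=1..s - j'.
        (-1) ^ (j' + t + 1) / of_nat t
        * of_nat ((i - j' - 1) choose (s + t - 1))
        * of_nat (s choose (t - 1))
        * of_nat (s choose (j - j'))
        / of_nat ((s - j') choose t))"

end

(*
  Write s = r + u + w + 1, i = r + 2u + 2w + 2, j = r + 2u + w + 1.  Swap the two sums and fix
  t = t' + 1: only j' = u + e with e \<le> w - t' contributes, and after clearing factorials the
  sum over j' is an alternating triple binomial sum.  Expanding its middle factor by
  Vandermonde and using twice the negative-binomial convolution
  sum_k (-1)^k C(R+k,k) C(S,n-k) = C(S-R-1,n), it collapses to a multiple of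
  C(s,t') C(u+w,w-t').  The remaining sum over t' is Vandermonde's C(i-1,w), and the
  prefactor i C(2s,i) turns this into C(2s,j).
*)
theory Submission
  imports Defs "HOL-Computational_Algebra.Formal_Power_Series"
begin

lemma sum_alternating_choose_convolution:
  assumes "R < S"
  shows "(\<Sum>k\<le>n. (-1)^k * of_nat (R + k choose k) * of_nat (S choose (n - k)))
           = (of_nat ((S - R - 1) choose n) :: 'a :: field_char_0)"
proof -
  have neg: "(- of_nat (R + 1) gchoose k :: 'a) = (-1)^k * of_nat (R + k choose k)" for k
  proof -
    have "(of_nat (R + 1) + of_nat k - 1 :: 'a) = of_nat (R + k)"
      by simp
    then show ?thesis
      by (simp only: gbinomial_minus binomial_gbinomial)
  qed
  have top: "(- of_nat (R + 1) + of_nat S :: 'a) = of_nat (S - R - 1)"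
    using assms by (simp add: of_nat_diff)
  have "(\<Sum>k\<le>n. (- of_nat (R + 1) gchoose k) * (of_nat S gchoose (n - k)))
          = (- of_nat (R + 1) + of_nat S gchoose n :: 'a)"
    using gbinomial_Vandermonde by (simp only: atLeast0AtMost)
  then show ?thesis
    unfolding neg top by (simp add: binomial_gbinomial mult.assoc)
qed

lemma choose_mult_choose_shift:
  "(r + m choose m) * (m choose c) = (r + c choose c) * (r + m choose (m - c))" if "c \<le> m"
proof -
  have "(r + m choose m) * (m choose (m - c)) = (r + m choose (m - c)) * (r + c choose c)"
    using choose_mult[of "m - c" m "r + m"] that by simp
  then show ?thesis
    using binomial_symmetric[OF that] by (simp add: mult.commute)
qed

lemma sum_alternating_choose_mult_choose:
  assumes "c \<le> n" and "r + c < S"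
  shows "(\<Sum>m\<le>n. (-1)^m * of_nat (r + m choose m) * of_nat (m choose c) * of_nat (S choose (n - m)))
           = (-1)^c * of_nat (r + c choose c) * (of_nat ((S - r - c - 1) choose (n - c)) :: 'a :: field_char_0)"
proof -
  have "(\<Sum>m\<le>n. (-1)^m * of_nat (r + m choose m) * of_nat (m choose c) * of_nat (S choose (n - m)))
      = (\<Sum>m\<in>{c..n}. (-1)^m * of_nat (r + m choose m) * of_nat (m choose c) * (of_nat (S choose (n - m)) :: 'a))"
    by (rule sum.mono_neutral_right) auto
  also have "\<dots> = (\<Sum>k\<le>n - c. (-1)^(c + k) * of_nat (r + (c + k) choose (c + k)) * of_nat (c + k choose c)
                               * of_nat (S choose (n - (c + k))))"
    using sum.atLeastAtMost_shift_0[OF assms(1)] by (simp add: atLeast0AtMost comp_def)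
  also have "\<dots> = (-1)^c * of_nat (r + c choose c)
                    * (\<Sum>k\<le>n - c. (-1)^k * of_nat (r + c + k choose k) * of_nat (S choose (n - c - k)))"
  proof -
    have "(of_nat (r + (c + k) choose (c + k)) * of_nat (c + k choose c) :: 'a)
        = of_nat (r + c choose c) * of_nat (r + c + k choose k)" for k
      using choose_mult_choose_shift[of c "c + k" r] by (simp add: add.assoc flip: of_nat_mult)
    then show ?thesis
      by (simp add: sum_distrib_left power_add diff_diff_eq mult_ac)
  qed
  also have "\<dots> = (-1)^c * of_nat (r + c choose c) * of_nat ((S - r - c - 1) choose (n - c))"
    using sum_alternating_choose_convolution[of "r + c" S "n - c"] assms by simp
  finally show ?thesis .
qed

lemma sum_alternating_choose_triple:
  assumes "n \<le> V" and "r + V < N"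
  shows "(\<Sum>m\<le>n. (-1)^m * of_nat (r + m choose m) * of_nat (N + m choose V) * of_nat (r + V + 1 choose (n - m)))
           = of_nat (N choose (V - n)) * (of_nat (N - r - V - 1 + n choose n) :: 'a :: field_char_0)"
proof -
  have Vandermonde: "(of_nat (N + m choose V) :: 'a) = (\<Sum>c\<le>n. of_nat (m choose c) * of_nat (N choose (V - c)))"
    if "m \<le> n" for m
  proof -
    have "N + m choose V = (\<Sum>c\<le>V. (m choose c) * (N choose (V - c)))"
      using vandermonde[of m N V] by (simp add: add.commute)
    also have "\<dots> = (\<Sum>c\<le>n. (m choose c) * (N choose (V - c)))"
      by (rule sum.mono_neutral_right) (use assms that in auto)
    finally show ?thesis
      by (simp flip: of_nat_mult of_nat_sum)
  qed
  have revision: "(of_nat (N choose (V - c)) * of_nat (V - c choose (n - c)) :: 'a)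
      = of_nat (N choose (V - n)) * of_nat (N - V + n choose (n - c))" if "c \<le> n" for c
  proof -
    have "(N choose (V - c)) * (V - c choose (V - n)) = (N choose (V - n)) * (N - V + n choose (n - c))"
      using choose_mult[of "V - n" "V - c" N] that assms by (simp add: Nat.diff_diff_right)
    then show ?thesis
      using binomial_symmetric[of "n - c" "V - c"] that assms by (simp flip: of_nat_mult)
  qed
  have "(\<Sum>m\<le>n. (-1)^m * of_nat (r + m choose m) * of_nat (N + m choose V) * of_nat (r + V + 1 choose (n - m)))
      = (\<Sum>m\<le>n. \<Sum>c\<le>n. of_nat (N choose (V - c)) * ((-1)^m * of_nat (r + m choose m) * of_nat (m choose c)
                                                   * (of_nat (r + V + 1 choose (n - m)) :: 'a)))"
    by (rule sum.cong[OF refl]) (simp add: Vandermonde sum_distrib_left sum_distrib_right mult_ac)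
  also have "\<dots> = (\<Sum>c\<le>n. of_nat (N choose (V - c)) * (\<Sum>m\<le>n. (-1)^m * of_nat (r + m choose m) * of_nat (m choose c)
                                                    * (of_nat (r + V + 1 choose (n - m)) :: 'a)))"
    by (subst sum.swap) (simp add: sum_distrib_left)
  also have "\<dots> = (\<Sum>c\<le>n. of_nat (N choose (V - c)) * ((-1)^c * of_nat (r + c choose c) * of_nat (V - c choose (n - c))))"
  proof (rule sum.cong[OF refl])
    fix c assume "c \<in> {..n}"
    then show "of_nat (N choose (V - c)) * (\<Sum>m\<le>n. (-1)^m * of_nat (r + m choose m) * of_nat (m choose c)
                                                  * of_nat (r + V + 1 choose (n - m)))
        = of_nat (N choose (V - c)) * ((-1)^c * of_nat (r + c choose c) * (of_nat (V - c choose (n - c)) :: 'a))"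
      using sum_alternating_choose_mult_choose[of c n r "r + V + 1", where 'a='a] assms by simp
  qed
  also have "\<dots> = of_nat (N choose (V - n))
                    * (\<Sum>c\<le>n. (-1)^c * of_nat (r + c choose c) * of_nat (N - V + n choose (n - c)))"
    unfolding sum_distrib_left
  proof (rule sum.cong[OF refl])
    fix c assume "c \<in> {..n}"
    then show "of_nat (N choose (V - c)) * ((-1)^c * of_nat (r + c choose c) * of_nat (V - c choose (n - c)))
        = of_nat (N choose (V - n)) * ((-1)^c * of_nat (r + c choose c) * (of_nat (N - V + n choose (n - c)) :: 'a))"
      using revision[of c] by (simp add: mult_ac)
  qed
  also have "\<dots> = of_nat (N choose (V - n)) * of_nat (N - r - V - 1 + n choose n)"
  proof -
    have "N - V + n - r - 1 = N - r - V - 1 + n"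
      using assms by simp
    then show ?thesis
      using sum_alternating_choose_convolution[of r "N - V + n" n, where 'a='a] assms by simp
  qed
  finally show ?thesis .
qed

lemma choose_div_choose_eq:
  fixes r V t m :: nat
  defines "N \<equiv> r + V + 1 + t"
  shows "(of_nat (N + m choose N) / (of_nat (Suc t) * of_nat (r + t + m + 1 choose Suc t)) :: 'a :: field_char_0)
           = fact t * fact r * fact V / fact N * (of_nat (r + m choose m) * of_nat (N + m choose V))"
proof -
  have a: "(of_nat (N + m choose N) :: 'a) = fact (N + m) / (fact N * fact m)"
    by (simp add: binomial_fact)
  have b: "(of_nat (r + t + m + 1 choose Suc t) :: 'a) = fact (r + t + m + 1) / (fact (Suc t) * fact (r + m))"
    by (subst binomial_fact) simp_all
  have c: "(of_nat (r + m choose m) :: 'a) = fact (r + m) / (fact m * fact r)"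
    by (simp add: binomial_fact)
  have d: "(of_nat (N + m choose V) :: 'a) = fact (N + m) / (fact V * fact (r + t + m + 1))"
    by (subst binomial_fact) (simp_all add: N_def algebra_simps)
  show ?thesis
    unfolding a b c d fact_Suc[of t] by (simp add: field_simps del: fact_Suc of_nat_Suc)
qed

lemma fact_mult_choose_mult_choose_eq:
  fixes r u w t :: nat
  assumes "t \<le> w"
  shows "fact t * fact r * fact (u + w) / fact (r + u + w + 1 + t)
           * (of_nat (r + u + w + 1 + t choose (u + t)) * of_nat (w choose t))
         = fact r * fact w / fact (r + w + 1) * (of_nat (u + w choose (w - t)) :: 'a :: field_char_0)"
proof -
  obtain k where k: "w = t + k"
    using assms le_Suc_ex by blast
  have a: "(of_nat (r + u + w + 1 + t choose (u + t)) :: 'a)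
      = fact (r + u + w + 1 + t) / (fact (u + t) * fact (r + w + 1))"
    by (subst binomial_fact) (simp_all add: k algebra_simps)
  have b: "(of_nat (w choose t) :: 'a) = fact w / (fact t * fact (w - t))"
    by (simp add: binomial_fact assms)
  have c: "(of_nat (u + w choose (w - t)) :: 'a) = fact (u + w) / (fact (w - t) * fact (u + t))"
    by (subst binomial_fact) (simp_all add: k algebra_simps)
  show ?thesis
    unfolding a b c by (simp add: field_simps del: fact_Suc of_nat_Suc)
qed

definition U_summand :: "nat \<Rightarrow> nat \<Rightarrow> nat \<Rightarrow> nat \<Rightarrow> nat \<Rightarrow> rat" where
  "U_summand s i j j' t = (-1) ^ (j' + t + 1) / of_nat t
        * of_nat ((i - j' - 1) choose (s + t - 1))
        * of_nat (s choose (t - 1))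
        * of_nat (s choose (j - j'))
        / of_nat ((s - j') choose t)"

lemma U_eq_sum_U_summand:
  "U s i j = (-1) ^ (s + i + j) * of_nat i * of_nat (2 * s choose i) *
     (\<Sum>j'=0..s. \<Sum>t=1..s - j'. U_summand s i j j' t)"
  unfolding U_def U_summand_def by simp

lemma U_summand_closed_form:
  assumes "s = r + u + w + 1" "i = r + 2 * u + 2 * w + 2" "j = r + 2 * u + w + 1"
    and "t + m + e = w"
  shows "U_summand s i j (u + e) (Suc t)
     = (-1)^(u + w) * of_nat (s choose t) * (fact t * fact r * fact (u + w) / fact (s + t))
       * ((-1)^m * of_nat (r + m choose m) * of_nat (s + t + m choose (u + w)) * of_nat (s choose e))"
proof -
  have "(-1::rat)^(u + w) * (-1)^m = (-1)^(u + w + m)"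
    by (simp only: power_add)
  also have "u + w + m = u + e + t + 2 * m"
    using assms(4) by simp
  also have "(-1::rat)^(u + e + t + 2 * m) = (-1)^(u + e + Suc t + 1)"
    by (simp add: power_add power_mult)
  finally have sign: "(-1::rat)^(u + e + Suc t + 1) = (-1)^(u + w) * (-1)^m" ..
  have "i - (u + e) - 1 = s + t + m" "s + Suc t - 1 = s + t" "s - (u + e) = r + t + m + 1"
    using assms by simp_all
  moreover have "s choose (j - (u + e)) = s choose e"
  proof -
    have "j - (u + e) = s - e" "e \<le> s"
      using assms by simp_all
    then show ?thesis
      using binomial_symmetric[of e s] by simp
  qed
  ultimately have "U_summand s i j (u + e) (Suc t)
      = (-1)^(u + e + Suc t + 1) * of_nat (s choose t) * of_nat (s choose e)
        * (of_nat (s + t + m choose (s + t)) / (of_nat (Suc t) * of_nat (r + t + m + 1 choose Suc t)))"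
    unfolding U_summand_def by (simp add: divide_inverse inverse_mult_distrib mult_ac)
  also have "\<dots> = (-1)^(u + w) * (-1)^m * of_nat (s choose t) * of_nat (s choose e)
       * (fact t * fact r * fact (u + w) / fact (s + t) * (of_nat (r + m choose m) * of_nat (s + t + m choose (u + w))))"
  proof -
    have st: "s + t = r + (u + w) + 1 + t"
      using assms(1) by simp
    show ?thesis
      unfolding st sign choose_div_choose_eq by (simp only: mult_ac)
  qed
  finally show ?thesis
    by (simp only: mult_ac)
qed

lemma U_summand_eq_0:
  assumes "s = r + u + w + 1" "i = r + 2 * u + 2 * w + 2" "j = r + 2 * u + w + 1"
    and "j' < u \<or> u + w < j' + t"
  shows "U_summand s i j j' (Suc t) = 0"
  using assms(4)
proof
  assume "j' < u"
  then have "s < j - j'"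
    using assms(1,3) by simp
  then show ?thesis
    unfolding U_summand_def by simp
next
  assume "u + w < j' + t"
  then have "i - j' - 1 < s + Suc t - 1"
    using assms(1,2) by simp
  then show ?thesis
    unfolding U_summand_def by (simp del: One_nat_def)
qed

lemma sum_U_summand_first_index:
  assumes params: "s = r + u + w + 1" "i = r + 2 * u + 2 * w + 2" "j = r + 2 * u + w + 1"
  shows "(\<Sum>j'=0..s. U_summand s i j j' (Suc t))
           = (if t \<le> w then (-1)^(u + w) * (fact r * fact w / fact (r + w + 1))
                             * of_nat (s choose t) * of_nat (u + w choose (w - t)) else 0)"
proof (cases "t \<le> w")
  case False
  then have "U_summand s i j j' (Suc t) = 0" for j'
    by (intro U_summand_eq_0[OF params]) arith
  with False show ?thesis
    by simp
next
  case True
  define n where "n = w - t"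
  define C where "C = (-1)^(u + w) * of_nat (s choose t) * (fact t * fact r * fact (u + w) / (fact (s + t) :: rat))"
  have "(\<Sum>j'=0..s. U_summand s i j j' (Suc t)) = (\<Sum>j'=u..u + n. U_summand s i j j' (Suc t))"
    by (rule sum.mono_neutral_right) (use U_summand_eq_0[OF params] params in \<open>auto simp: n_def\<close>)
  also have "\<dots> = (\<Sum>m\<le>n. U_summand s i j (u + (n - m)) (Suc t))"
    by (rule sum.reindex_bij_witness[where j="\<lambda>j'. u + n - j'" and i="\<lambda>m. u + (n - m)"]) auto
  also have "\<dots> = C * (\<Sum>m\<le>n. (-1)^m * of_nat (r + m choose m) * of_nat (s + t + m choose (u + w))
                               * of_nat (r + (u + w) + 1 choose (n - m)))"
    unfolding sum_distrib_left
  proof (rule sum.cong[OF refl])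
    fix m assume "m \<in> {..n}"
    then have "t + m + (n - m) = w"
      using True by (simp add: n_def)
    then show "U_summand s i j (u + (n - m)) (Suc t) = C * ((-1)^m * of_nat (r + m choose m)
        * of_nat (s + t + m choose (u + w)) * of_nat (r + (u + w) + 1 choose (n - m)))"
      using U_summand_closed_form[OF params] params(1) by (simp add: C_def add.assoc)
  qed
  also have "\<dots> = C * (of_nat (s + t choose (u + t)) * of_nat (w choose t))"
    using sum_alternating_choose_triple[of n "u + w" r "s + t", where 'a=rat] True params(1)
    by (simp add: n_def binomial_symmetric[of t w])
  also have "\<dots> = (-1)^(u + w) * of_nat (s choose t) * (fact t * fact r * fact (u + w) / fact (r + u + w + 1 + t)
                    * (of_nat (r + u + w + 1 + t choose (u + t)) * of_nat (w choose t)))"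
    unfolding C_def params(1) by (simp only: mult_ac)
  also have "\<dots> = (-1)^(u + w) * (fact r * fact w / fact (r + w + 1))
                    * of_nat (s choose t) * of_nat (u + w choose (w - t))"
    unfolding fact_mult_choose_mult_choose_eq[OF True] by (simp only: mult_ac)
  finally show ?thesis
    using True by simp
qed

lemma sum_U_summand:
  assumes params: "s = r + u + w + 1" "i = r + 2 * u + 2 * w + 2" "j = r + 2 * u + w + 1"
  shows "(\<Sum>j'=0..s. \<Sum>t=1..s - j'. U_summand s i j j' t)
           = (-1)^(u + w) * (fact r * fact w / fact (r + w + 1)) * of_nat (i - 1 choose w)"
proof -
  \<comment> \<open>the added terms vanish through their numerator binomial, not through division by zero\<close>
  have "(\<Sum>j'=0..s. \<Sum>t=1..s - j'. U_summand s i j j' t) = (\<Sum>j'=0..s. \<Sum>t=1..s. U_summand s i j j' t)"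
  proof (rule sum.cong[OF refl], rule sum.mono_neutral_left)
    fix j' assume j': "j' \<in> {0..s}"
    show "\<forall>t\<in>{1..s} - {1..s - j'}. U_summand s i j j' t = 0"
    proof
      fix t assume "t \<in> {1..s} - {1..s - j'}"
      then obtain t' where "t = Suc t'" and "s - j' \<le> t'"
        by (cases t) auto
      moreover have "u + w < j' + t'"
        using \<open>s - j' \<le> t'\<close> j' params(1) by simp
      ultimately show "U_summand s i j j' t = 0"
        using U_summand_eq_0[OF params, of j' t'] by simp
    qed
  qed auto
  also have "\<dots> = (\<Sum>t=1..s. \<Sum>j'=0..s. U_summand s i j j' t)"
    by (rule sum.swap)
  also have "\<dots> = (\<Sum>t=0..s - 1. \<Sum>j'=0..s. U_summand s i j j' (Suc t))"
  proof -
    have shift: "{1..s} = {Suc 0..Suc (s - 1)}"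
      using params(1) by simp
    show ?thesis
      unfolding shift sum.atLeast_Suc_atMost_Suc_shift comp_def ..
  qed
  also have "\<dots> = (\<Sum>t=0..s - 1. if t \<le> w then (-1)^(u + w) * (fact r * fact w / fact (r + w + 1))
                                * of_nat (s choose t) * of_nat (u + w choose (w - t)) else 0)"
    unfolding sum_U_summand_first_index[OF params] ..
  also have "\<dots> = (\<Sum>t\<le>w. (-1)^(u + w) * (fact r * fact w / fact (r + w + 1))
                                * of_nat (s choose t) * of_nat (u + w choose (w - t)))"
    by (rule sum.mono_neutral_cong_right) (use params(1) in auto)
  also have "\<dots> = (-1)^(u + w) * (fact r * fact w / fact (r + w + 1)) * of_nat (s + (u + w) choose w)"
    by (simp add: vandermonde[symmetric] sum_distrib_left mult.assoc)
  finally show ?thesis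
    using params by (simp add: add_ac mult_2)
qed

lemma U_closed_form:
  assumes params: "s = r + u + w + 1" "i = r + 2 * u + 2 * w + 2" "j = r + 2 * u + w + 1"
  shows "U s i j = (-1) ^ (j + 1) * of_nat (2 * s choose j)"
proof -
  have sign: "(-1::rat)^(s + i + j) * (-1)^(u + w) = (-1)^(j + 1)"
  proof -
    have "(-1::rat)^(s + i + j) * (-1)^(u + w) = (-1)^(s + i + j + (u + w))"
      by (simp only: power_add)
    also have "s + i + j + (u + w) = j + 1 + 2 * (r + 2 * u + 2 * w + 1)"
      using params by simp
    also have "(-1::rat)^(j + 1 + 2 * (r + 2 * u + 2 * w + 1)) = (-1)^(j + 1)"
      by (simp add: power_add power_mult)
    finally show ?thesis .
  qed
  have binomials: "of_nat i * of_nat (2 * s choose i) * (fact r * fact w / fact (r + w + 1)) * of_nat (i - 1 choose w)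
      = (of_nat (2 * s choose j) :: rat)"
  proof -
    have "i \<le> 2 * s" "2 * s - i = r" "w \<le> i - 1" "i - 1 - w = j" "j \<le> 2 * s" "2 * s - j = r + w + 1"
      using params by simp_all
    then have a: "(of_nat (2 * s choose i) :: rat) = fact (2 * s) / (fact i * fact r)"
      and b: "(of_nat (i - 1 choose w) :: rat) = fact (i - 1) / (fact w * fact j)"
      and c: "(of_nat (2 * s choose j) :: rat) = fact (2 * s) / (fact j * fact (r + w + 1))"
      using binomial_fact by metis+
    have "0 < i"
      using params(2) by simp
    then have d: "(fact i :: rat) = of_nat i * fact (i - 1)"
      by (rule fact_reduce)
    show ?thesis
      unfolding a b c d using \<open>0 < i\<close> by (simp add: field_simps del: fact_Suc of_nat_Suc)
  qed
  have "U s i j = ((-1)^(s + i + j) * (-1)^(u + w))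
      * (of_nat i * of_nat (2 * s choose i) * (fact r * fact w / fact (r + w + 1)) * of_nat (i - 1 choose w))"
    unfolding U_eq_sum_U_summand sum_U_summand[OF params] by (simp only: mult_ac)
  then show ?thesis
    unfolding sign binomials .
qed

theorem corollary6:
  fixes s i j :: nat
  assumes "1 \<le> s" and "s \<le> j" and "j < i" and "i \<le> 2 * s"
  shows "U s i j = (-1) ^ (j + 1) * of_nat (2 * s choose j)"
  by (rule U_closed_form[of s "2 * s - i" "j - s" "i - j - 1"]) (use assms in simp_all)

end
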